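(* Let $R,S$ be finite nonempty sets, $k$ a positive integer, $p_r>0$ ($r\in R$), $T=\sum_{r\in R}p_r$. Let $d_r\ge0$ ($r\in R$), not all zero, be a distribution of distances, with $\alpha=\frac{\sum_{r\in R}p_rd_r}{\sum_{r\in R}p_rd_r^2}$ and population-weighted mean $\mu_D=\frac1T\sum_{r\in R}p_rd_r$. Let $\epsilon<0$ and $\kappa=\alpha\epsilon$. Let $U\subseteq S$, $c_s\ge0$ for $s\in U$, and let $X$ be the set of $\mathbf x\in\{0,1\}^S$ with $\sum_{s\in S}x_s=k$; let $\sigma^{max}=\max_{\mathbf x\in X}\sum_{s\in U}c_sx_s$. If $\sigma^{max}\le\mu_D$, then for every $\mathbf x\in X$, \[ q=-\kappa\sum_{s\in U}c_sx_s\le|\epsilon|. \]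
   Context: $\epsilon$ is the Kolm–Pollak inequality-aversion parameter (negative for undesirable quantities like distance) and $\alpha$ its normalizing factor computed from the distribution $D=\{d_r\}$; $q$ is the argument of the exponential in the penalty term of the penalized Kolm–Pollak facility location model, where $x_s$ indicates opening a facility at $s$ and $c_s$ is a distance penalty on less desirable location $s\in U$. *)

theory Defs
  imports Complex_Main "HOL-Library.FuncSet"
begin

definition kp_alpha :: "'r set \<Rightarrow> ('r \<Rightarrow> real) \<Rightarrow> ('r \<Rightarrow> real) \<Rightarrow> real" where
  "kp_alpha R p d = (\<Sum>r\<in>R. p r * d r) / (\<Sum>r\<in>R. p r * (d r)^2)"

definition weighted_mean :: "'r set \<Rightarrow> ('r \<Rightarrow> real) \<Rightarrow> ('r \<Rightarrow> real) \<Rightarrow> real" where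
  "weighted_mean R p d = (\<Sum>r\<in>R. p r * d r) / (\<Sum>r\<in>R. p r)"

definition configs :: "'s set \<Rightarrow> nat \<Rightarrow> ('s \<Rightarrow> real) set" where
  "configs S k = {x \<in> S \<rightarrow>\<^sub>E {0, 1}. (\<Sum>s\<in>S. x s) = real k}"

end

theory Submission
  imports Defs "HOL-Analysis.Convex"
begin

text \<open>With \<open>\<sigma> = \<Sum>\<^sub>s c\<^sub>s x\<^sub>s\<close> and \<open>\<kappa> = -\<alpha> \<bar>\<epsilon>\<bar>\<close> the claim reads \<open>\<alpha> \<sigma> \<le> 1\<close>.
  Since \<open>0 \<le> \<sigma> \<le> \<sigma>_max \<le> \<mu>\<^sub>D\<close> and \<open>\<alpha> \<ge> 0\<close>, it suffices that
  \<open>\<alpha> \<mu>\<^sub>D = (\<Sum> p d)\<^sup>2 / ((\<Sum> p) (\<Sum> p d\<^sup>2)) \<le> 1\<close>, which is the weighted Cauchy-Schwarz inequality.\<close>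

lemma weighted_Cauchy_Schwarz_sum:
  fixes p d :: "'a \<Rightarrow> real"
  assumes "\<And>r. r \<in> R \<Longrightarrow> p r \<ge> 0"
  shows "(\<Sum>r\<in>R. p r * d r)\<^sup>2 \<le> (\<Sum>r\<in>R. p r) * (\<Sum>r\<in>R. p r * (d r)\<^sup>2)"
proof -
  have "(\<Sum>r\<in>R. p r * d r) = (\<Sum>r\<in>R. sqrt (p r) * (sqrt (p r) * d r))"
    using assms by (intro sum.cong) (simp_all flip: mult.assoc)
  also have "(\<dots>)\<^sup>2 \<le> (\<Sum>r\<in>R. (sqrt (p r))\<^sup>2) * (\<Sum>r\<in>R. (sqrt (p r) * d r)\<^sup>2)"
    by (rule Cauchy_Schwarz_ineq_sum)
  also have "\<dots> = (\<Sum>r\<in>R. p r) * (\<Sum>r\<in>R. p r * (d r)\<^sup>2)"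
    using assms by (simp add: power_mult_distrib)
  finally show ?thesis .
qed

lemma kp_alpha_mult_weighted_mean_le_1:
  assumes "finite R" "\<And>r. r \<in> R \<Longrightarrow> p r > 0" "\<exists>r\<in>R. d r \<noteq> 0"
  shows "kp_alpha R p d * weighted_mean R p d \<le> 1"
proof -
  obtain r0 where r0: "r0 \<in> R" "d r0 \<noteq> 0"
    using assms(3) by blast
  have T_pos: "(\<Sum>r\<in>R. p r) > 0"
    using assms(1,2) r0(1) by (intro sum_pos) auto
  have B_pos: "(\<Sum>r\<in>R. p r * (d r)\<^sup>2) > 0"
    using assms(1,2) r0 by (intro sum_pos2[where i = r0]) (auto simp: less_imp_le)
  have "kp_alpha R p d * weighted_mean R p d
      = (\<Sum>r\<in>R. p r * d r)\<^sup>2 / ((\<Sum>r\<in>R. p r) * (\<Sum>r\<in>R. p r * (d r)\<^sup>2))"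
    by (simp add: kp_alpha_def weighted_mean_def power2_eq_square mult.commute)
  also have "\<dots> \<le> 1"
    using weighted_Cauchy_Schwarz_sum[of R p d] assms(2) T_pos B_pos
    by (simp add: less_imp_le)
  finally show ?thesis .
qed

lemma kp_alpha_nonneg:
  assumes "\<And>r. r \<in> R \<Longrightarrow> p r \<ge> 0" "\<And>r. r \<in> R \<Longrightarrow> d r \<ge> 0"
  shows "kp_alpha R p d \<ge> 0"
  unfolding kp_alpha_def using assms by (intro divide_nonneg_nonneg sum_nonneg) auto

lemma finite_configs: "finite S \<Longrightarrow> finite (configs S k)"
  by (rule finite_subset[of _ "S \<rightarrow>\<^sub>E {0, 1::real}"]) (auto simp: configs_def finite_PiE)

lemma configs_nonneg: "x \<in> configs S k \<Longrightarrow> s \<in> S \<Longrightarrow> x s \<ge> 0"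
  unfolding configs_def using PiE_mem by fastforce

theorem proposition5:
  fixes R :: "'r set" and S :: "'s set" and U :: "'s set"
    and k :: nat and p d :: "'r \<Rightarrow> real" and c :: "'s \<Rightarrow> real" and \<epsilon> :: real
  assumes "finite R" "R \<noteq> {}" "finite S" "S \<noteq> {}" "k > 0"
    and "\<And>r. r \<in> R \<Longrightarrow> p r > 0"
    and "\<And>r. r \<in> R \<Longrightarrow> d r \<ge> 0"
    and "\<exists>r\<in>R. d r \<noteq> 0"
    and "\<epsilon> < 0"
    and "U \<subseteq> S"
    and "\<And>s. s \<in> U \<Longrightarrow> c s \<ge> 0"
    and "Max ((\<lambda>x. \<Sum>s\<in>U. c s * x s) ` configs S k) \<le> weighted_mean R p d"
    and "x \<in> configs S k"
  shows "- (kp_alpha R p d * \<epsilon>) * (\<Sum>s\<in>U. c s * x s) \<le> \<bar>\<epsilon>\<bar>"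
proof -
  define \<alpha> where "\<alpha> = kp_alpha R p d"
  define \<sigma> where "\<sigma> = (\<Sum>s\<in>U. c s * x s)"
  have "\<sigma> \<le> Max ((\<lambda>x. \<Sum>s\<in>U. c s * x s) ` configs S k)"
    unfolding \<sigma>_def using finite_configs[OF assms(3)] assms(13) by simp
  with assms(12) have \<sigma>_le_mean: "\<sigma> \<le> weighted_mean R p d"
    by linarith
  have "\<sigma> \<ge> 0"
    unfolding \<sigma>_def using assms(10,11,13) configs_nonneg by (force intro: sum_nonneg)
  have "\<alpha> \<ge> 0"
    unfolding \<alpha>_def using assms(6,7) kp_alpha_nonneg less_imp_le by metis
  have "- (\<alpha> * \<epsilon>) * \<sigma> = \<alpha> * \<sigma> * \<bar>\<epsilon>\<bar>"
    using assms(9) by simp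
  also have "\<dots> \<le> \<alpha> * weighted_mean R p d * \<bar>\<epsilon>\<bar>"
    using \<sigma>_le_mean \<open>\<alpha> \<ge> 0\<close> by (intro mult_right_mono mult_left_mono) auto
  also have "\<dots> \<le> \<bar>\<epsilon>\<bar>"
    using kp_alpha_mult_weighted_mean_le_1[OF assms(1,6,8)] \<sigma>_le_mean \<open>\<sigma> \<ge> 0\<close> \<open>\<alpha> \<ge> 0\<close>
    unfolding \<alpha>_def by (intro mult_left_le_one_le) auto
  finally show ?thesis
    unfolding \<alpha>_def \<sigma>_def .
qed

end
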